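(* Let $\Sigma$ be the signature consisting of two non-rigid constant symbols $a,b$. For $n\in\mathbb N$ let $\chi_n$ be a classical first-order sentence (in the pure language of equality) expressing that the domain has at least $n$ elements, and let $X=\{\chi_n\mid n\in\mathbb N\}$. Let $\eta := \big(\mathrm{dep}(a,b)\wedge \mathrm{dep}(b,a)\wedge \exists^{\mathsf i}x\,(x\neq b)\big)\to \exists^{\mathsf i}x\,(x\neq a)$ and $\theta:=\exists^{\mathsf i}x\,\exists^{\mathsf i}y\,\neg(x=a\wedge y=b)$. Then: (1) $X\cup\{\eta\}\models_{\mathrm{id}}\theta$; and (2) for every finite $X_0\subseteq X$, $X_0\cup\{\eta\}\not\models_{\mathrm{id}}\theta$.
   Context: Inquisitive first-order logic InqBQ. A signature consists of predicate symbols and function symbols, each with an arity; function symbols are either rigid or non-rigid, and function symbols of arity $0$ are constant symbols. Terms are built from variables and function symbols as usual. Formulas are given by $\phi ::= P(t_1,\dots,t_n)\mid (t=t')\mid \bot\mid (\phi\wedge\phi)\mid(\phi\mathbin{\vee\!\!\!\vee}\phi)\mid(\phi\to\phi)\mid\forall x\phi\mid\exists^{\mathsf i}x\phi$, where $\mathbin{\vee\!\!\!\vee}$ is inquisitive disjunction and $\exists^{\mathsf i}$ is the inquisitive existential quantifier. Abbreviations: $\neg\phi:=\phi\to\bot$, $(t\neq t'):=\neg(t=t')$; the classical connectives $\vee,\exists$ are defined by $\phi\vee\psi:=\neg(\neg\phi\wedge\neg\psi)$, $\exists x\phi:=\neg\forall x\neg\phi$. Formulas without $\mathbin{\vee\!\!\!\vee}$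 and $\exists^{\mathsf i}$ are called classical. An id-model is a triple $M=(W,D,I)$ with $W$ a non-empty set of worlds, $D$ a non-empty domain, and $I$ assigning to each world $w$ an interpretation $I_w$ giving each $n$-ary predicate $P$ a relation $P_w\subseteq D^n$ and each $n$-ary function symbol $f$ a function $f_w:D^n\to D$ (rigid symbols get the same interpretation at every world); equality is interpreted as identity on $D$ at every world. Term values $[t]^g_w$ are defined as usual. Support of a formula at a state $s\subseteq W$ under an assignment $g$: $M,s\models_g P(t_1,\dots,t_n)$ iff $([t_1]^g_w,\dots,[t_n]^g_w)\in P_w$ for all $w\in s$; $M,s\models_g t=t'$ iff $[t]^g_w=[t']^g_w$ for all $w\in s$; $M,s\models_g\bot$ iff $s=\emptyset$; $\wedge$ is conjunction of support; $M,s\models_g\phi\mathbin{\vee\!\!\!\vee}\psi$ iff $M,s\models_g\phi$ or $M,s\models_g\psi$; $M,s\models_g\phi\to\psi$ iff for every $t\subseteq s$, $M,t\models_g\phi$ implies $M,t\models_g\psi$; $M,s\models_g\forall x\phi$ iff $M,s\models_{g[x\mapsto d]}\phi$ for all $d\in D$; $M,s\models_g\exists^{\mathsf i}x\phi$ iff $M,s\models_{g[x\mapsto d]}\phi$ for some $d\in D$. For a term $t$, $\lambda t:=\exists^{\mathsf i}x\,(x=t)$ with $x$ a variable not occurring in $t$, and $\mathrm{dep}(t,t'):=\lambda t\to\lambda t'$. id-entailment: $\Phi\models_{\mathrm{id}}\psi$ means that for every id-model $M$, state $s\subseteq W$ and assignment $g$, if $M,s\models_g\phi$ for all $\phi\in\Phi$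 then $M,s\models_g\psi$. *)

theory Defs
  imports Main
begin

datatype trm = Var nat | CA | CB

datatype fm =
    Eq trm trm
  | Bot
  | Conj fm fm
  | IOr fm fm
  | Imp fm fm
  | All nat fm
  | IEx nat fm

record ('w, 'd) idmodel =
  Wor :: "'w set"
  Dom :: "'d set"
  ia :: "'w \<Rightarrow> 'd"
  ib :: "'w \<Rightarrow> 'd"

definition wf_model :: "('w, 'd) idmodel \<Rightarrow> bool" where
  "wf_model M \<longleftrightarrow> Wor M \<noteq> {} \<and> Dom M \<noteq> {} \<and>
     (\<forall>w \<in> Wor M. ia M w \<in> Dom M \<and> ib M w \<in> Dom M)"

fun tval :: "('w, 'd) idmodel \<Rightarrow> 'w \<Rightarrow> (nat \<Rightarrow> 'd) \<Rightarrow> trm \<Rightarrow> 'd" where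
  "tval M w g (Var x) = g x"
| "tval M w g CA = ia M w"
| "tval M w g CB = ib M w"

fun supp :: "('w, 'd) idmodel \<Rightarrow> 'w set \<Rightarrow> (nat \<Rightarrow> 'd) \<Rightarrow> fm \<Rightarrow> bool" where
  "supp M s g (Eq t t') = (\<forall>w \<in> s. tval M w g t = tval M w g t')"
| "supp M s g Bot = (s = {})"
| "supp M s g (Conj p q) = (supp M s g p \<and> supp M s g q)"
| "supp M s g (IOr p q) = (supp M s g p \<or> supp M s g q)"
| "supp M s g (Imp p q) = (\<forall>t \<subseteq> s. supp M t g p \<longrightarrow> supp M t g q)"
| "supp M s g (All x p) = (\<forall>d \<in> Dom M. supp M s (g(x := d)) p)"
| "supp M s g (IEx x p) = (\<exists>d \<in> Dom M. supp M s (g(x := d)) p)"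

text \<open>id-entailment, relative to the types of worlds and domain elements
(the type arguments only fix the ambient HOL types; W and D are arbitrary
non-empty subsets of them).\<close>
definition id_entails :: "'w itself \<Rightarrow> 'd itself \<Rightarrow> fm set \<Rightarrow> fm \<Rightarrow> bool" where
  "id_entails _ _ \<Phi> \<psi> \<longleftrightarrow>
     (\<forall>(M :: ('w, 'd) idmodel) s g. wf_model M \<and> s \<subseteq> Wor M \<and> (\<forall>x. g x \<in> Dom M) \<and>
        (\<forall>\<phi> \<in> \<Phi>. supp M s g \<phi>) \<longrightarrow> supp M s g \<psi>)"

definition neg :: "fm \<Rightarrow> fm" where "neg p = Imp p Bot"
definition neq :: "trm \<Rightarrow> trm \<Rightarrow> fm" where "neq t t' = neg (Eq t t')"
definition cex :: "nat \<Rightarrow> fm \<Rightarrow> fm" where "cex x p = neg (All x (neg p))"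

text \<open>lambda t = iEx x (x = t), x not in t; for t = a or b any variable is fresh.\<close>
definition lam :: "trm \<Rightarrow> fm" where "lam t = IEx 0 (Eq (Var 0) t)"
definition dep :: "trm \<Rightarrow> trm \<Rightarrow> fm" where "dep t t' = Imp (lam t) (lam t')"

fun conjs :: "fm list \<Rightarrow> fm" where
  "conjs [] = neg Bot"
| "conjs (p # ps) = Conj p (conjs ps)"

fun cexs :: "nat list \<Rightarrow> fm \<Rightarrow> fm" where
  "cexs [] p = p"
| "cexs (x # xs) p = cex x (cexs xs p)"

definition chi :: "nat \<Rightarrow> fm" where
  "chi n = cexs [0..<n] (conjs [neq (Var i) (Var j). i \<leftarrow> [0..<n], j \<leftarrow> [0..<n], i < j])"

definition Xset :: "fm set" where "Xset = range chi"

definition eta :: fm where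
  "eta = Imp (Conj (Conj (dep CA CB) (dep CB CA)) (IEx 0 (neq (Var 0) CB)))
             (IEx 0 (neq (Var 0) CA))"

definition theta :: fm where
  "theta = IEx 0 (IEx 1 (neg (Conj (Eq (Var 0) CA) (Eq (Var 1) CB))))"

end

theory Submission
  imports Defs "HOL-Library.Nat_Bijection"
begin

text \<open>On a state s, eta says: whenever a and b determine each other on a substate t and the
values of b on t miss some individual, so do the values of a. The realised pairs (a, b) on such
a t form the graph of a bijection between the values of a and those of b, so over a finite domain
eta is valid by counting. Hence the model whose worlds realise every pair over an m-element domain
supports eta and all chi n with n \<le> m, yet refutes theta, which says that some pair is not
realised. Over an infinite domain, which a non-empty state supporting every chi n forces, take
an injection f of the domain into itself that misses a point: if every pair were realised, the
substate realising exactly the graph of f would violate eta.\<close>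

fun truth :: "('w, 'd) idmodel \<Rightarrow> 'w \<Rightarrow> (nat \<Rightarrow> 'd) \<Rightarrow> fm \<Rightarrow> bool" where
  "truth M w g (Eq t t') = (tval M w g t = tval M w g t')"
| "truth M w g Bot = False"
| "truth M w g (Conj p q) = (truth M w g p \<and> truth M w g q)"
| "truth M w g (IOr p q) = (truth M w g p \<or> truth M w g q)"
| "truth M w g (Imp p q) = (truth M w g p \<longrightarrow> truth M w g q)"
| "truth M w g (All x p) = (\<forall>d \<in> Dom M. truth M w (g(x := d)) p)"
| "truth M w g (IEx x p) = (\<exists>d \<in> Dom M. truth M w (g(x := d)) p)"

fun classical :: "fm \<Rightarrow> bool" where
  "classical (Eq t t') = True"
| "classical Bot = True"
| "classical (Conj p q) = (classical p \<and> classical q)"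
| "classical (IOr p q) = False"
| "classical (Imp p q) = (classical p \<and> classical q)"
| "classical (All x p) = classical p"
| "classical (IEx x p) = False"

lemma supp_classical:
  "classical p \<Longrightarrow> supp M s g p \<longleftrightarrow> (\<forall>w\<in>s. truth M w g p)"
proof (induction p arbitrary: s g)
  case (Imp p q)
  have "(\<forall>t\<subseteq>s. (\<forall>w\<in>t. truth M w g p) \<longrightarrow> (\<forall>w\<in>t. truth M w g q)) \<longleftrightarrow>
      (\<forall>w\<in>s. truth M w g p \<longrightarrow> truth M w g q)"
    by (auto dest: spec[of _ "{_}"])
  with Imp show ?case by simp
qed auto

lemma supp_neg: "classical p \<Longrightarrow> supp M s g (neg p) \<longleftrightarrow> (\<forall>w\<in>s. \<not> truth M w g p)"
  unfolding neg_def by (subst supp_classical) auto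

lemma truth_conjs: "truth M w g (conjs ps) \<longleftrightarrow> (\<forall>p\<in>set ps. truth M w g p)"
  by (induction ps) (auto simp: neg_def)

lemma truth_cexs:
  "truth M w g (cexs xs p) \<longleftrightarrow>
     (\<exists>h. h ` set xs \<subseteq> Dom M \<and> truth M w (override_on g h (set xs)) p)"
proof (induction xs arbitrary: g)
  case (Cons x xs)
  have "truth M w g (cexs (x # xs) p) \<longleftrightarrow>
      (\<exists>d\<in>Dom M. \<exists>h. h ` set xs \<subseteq> Dom M \<and> truth M w (override_on (g(x := d)) h (set xs)) p)"
    using Cons.IH by (simp add: cex_def neg_def fun_upd_def)
  also have "\<dots> \<longleftrightarrow>
      (\<exists>h. h ` set (x # xs) \<subseteq> Dom M \<and> truth M w (override_on g h (set (x # xs))) p)"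
  proof
    assume "\<exists>d\<in>Dom M. \<exists>h. h ` set xs \<subseteq> Dom M \<and> truth M w (override_on (g(x := d)) h (set xs)) p"
    then obtain d h where d: "d \<in> Dom M" and h: "h ` set xs \<subseteq> Dom M"
      and truth_h: "truth M w (override_on (g(x := d)) h (set xs)) p" by blast
    define h' where "h' y = (if y \<in> set xs then h y else d)" for y
    have "override_on (g(x := d)) h (set xs) = override_on g h' (set (x # xs))"
      by (auto simp: override_on_def h'_def)
    with truth_h have "truth M w (override_on g h' (set (x # xs))) p" by simp
    moreover have "h' ` set (x # xs) \<subseteq> Dom M" using d h by (auto simp: h'_def)
    ultimately show "\<exists>h. h ` set (x # xs) \<subseteq> Dom M \<and> truth M w (override_on g h (set (x # xs))) p"
      by blast
  next
    assume "\<exists>h. h ` set (x # xs) \<subseteq> Dom M \<and> truth M w (override_on g h (set (x # xs))) p"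
    then obtain h where h: "h ` set (x # xs) \<subseteq> Dom M"
      and truth_h: "truth M w (override_on g h (set (x # xs))) p" by blast
    have "override_on g h (set (x # xs)) = override_on (g(x := h x)) h (set xs)"
      by (auto simp: override_on_def)
    with truth_h have "truth M w (override_on (g(x := h x)) h (set xs)) p" by simp
    moreover have "h x \<in> Dom M" "h ` set xs \<subseteq> Dom M" using h by auto
    ultimately show "\<exists>d\<in>Dom M. \<exists>h. h ` set xs \<subseteq> Dom M \<and>
        truth M w (override_on (g(x := d)) h (set xs)) p"
      by blast
  qed
  finally show ?case .
qed simp

lemma classical_chi: "classical (chi n)"
proof -
  have "classical (conjs ps)" if "\<forall>p\<in>set ps. classical p" for ps
    using that by (induction ps) (auto simp: neg_def)
  moreover have "classical (cexs xs p)" if "classical p" for xs p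
    using that by (induction xs) (auto simp: cex_def neg_def)
  ultimately show ?thesis
    by (auto simp: chi_def neq_def neg_def)
qed

lemma truth_chi: "truth M w g (chi n) \<longleftrightarrow> (\<exists>h. inj_on h {..<n} \<and> h ` {..<n} \<subseteq> Dom M)"
proof -
  have distinct_iff_inj: "(\<forall>i<n. \<forall>j<n. i < j \<longrightarrow> h i \<noteq> h j) \<longleftrightarrow> inj_on h {..<n}"
    for h :: "nat \<Rightarrow> 'b"
    by (auto simp: inj_on_def) (metis linorder_neqE_nat)
  show ?thesis
    by (auto simp: chi_def truth_cexs truth_conjs neq_def neg_def override_on_def
        atLeast0LessThan distinct_iff_inj[symmetric])
qed

lemma supp_chi:
  assumes "s \<noteq> {}"
  shows "supp M s g (chi n) \<longleftrightarrow> infinite (Dom M) \<or> n \<le> card (Dom M)"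
proof -
  have "supp M s g (chi n) \<longleftrightarrow> (\<exists>h. inj_on h {..<n} \<and> h ` {..<n} \<subseteq> Dom M)"
    using assms by (simp add: supp_classical classical_chi truth_chi ex_in_conv)
  also have "\<dots> \<longleftrightarrow> infinite (Dom M) \<or> n \<le> card (Dom M)"
  proof (cases "finite (Dom M)")
    case True
    then show ?thesis by (metis card_inj_on_le card_le_inj card_lessThan finite_lessThan)
  next
    case False
    then obtain h :: "nat \<Rightarrow> 'b" where "inj h" "range h \<subseteq> Dom M"
      using infinite_countable_subset by blast
    then have "inj_on h {..<n} \<and> h ` {..<n} \<subseteq> Dom M"
      using inj_on_subset by blast
    with False show ?thesis by blast
  qed
  finally show ?thesis .
qed

fun closed_trm :: "trm \<Rightarrow> bool" where
  "closed_trm (Var x) = False"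
| "closed_trm CA = True"
| "closed_trm CB = True"

lemma tval_fun_upd_closed_trm: "closed_trm t \<Longrightarrow> tval M w (g(x := d)) t = tval M w g t"
  by (cases t) simp_all

lemma tval_closed_trm_in_Dom:
  "wf_model M \<Longrightarrow> w \<in> Wor M \<Longrightarrow> closed_trm t \<Longrightarrow> tval M w g t \<in> Dom M"
  by (cases t) (simp_all add: wf_model_def)

lemma supp_lam:
  assumes "wf_model M" "s \<subseteq> Wor M" "closed_trm t"
  shows "supp M s g (lam t) \<longleftrightarrow> (\<forall>w\<in>s. \<forall>v\<in>s. tval M w g t = tval M v g t)"
proof -
  have "supp M s g (lam t) \<longleftrightarrow> (\<exists>d\<in>Dom M. \<forall>w\<in>s. d = tval M w g t)"
    by (simp add: lam_def tval_fun_upd_closed_trm[OF assms(3)])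
  also have "\<dots> \<longleftrightarrow> (\<forall>w\<in>s. \<forall>v\<in>s. tval M w g t = tval M v g t)"
  proof (cases "s = {}")
    case True
    then show ?thesis using assms(1) by (simp add: wf_model_def ex_in_conv)
  next
    case False
    then obtain w0 where "w0 \<in> s" by blast
    with assms(2) have "tval M w0 g t \<in> Dom M"
      by (intro tval_closed_trm_in_Dom[OF assms(1) _ assms(3)]) blast
    with \<open>w0 \<in> s\<close> show ?thesis by (metis (no_types, lifting))
  qed
  finally show ?thesis .
qed

lemma supp_dep:
  assumes "wf_model M" "s \<subseteq> Wor M" "closed_trm t" "closed_trm t'"
  shows "supp M s g (dep t t') \<longleftrightarrow>
    (\<forall>w\<in>s. \<forall>v\<in>s. tval M w g t = tval M v g t \<longrightarrow> tval M w g t' = tval M v g t')"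
proof -
  have "supp M s' g (lam u) \<longleftrightarrow> (\<forall>w\<in>s'. \<forall>v\<in>s'. tval M w g u = tval M v g u)"
    if "s' \<subseteq> s" "closed_trm u" for s' u
    by (rule supp_lam[OF assms(1) order_trans[OF that(1) assms(2)] that(2)])
  then have "supp M s g (dep t t') \<longleftrightarrow> (\<forall>s'\<subseteq>s.
      (\<forall>w\<in>s'. \<forall>v\<in>s'. tval M w g t = tval M v g t) \<longrightarrow>
      (\<forall>w\<in>s'. \<forall>v\<in>s'. tval M w g t' = tval M v g t'))"
    using assms(3,4) by (simp add: dep_def)
  also have "\<dots> \<longleftrightarrow>
      (\<forall>w\<in>s. \<forall>v\<in>s. tval M w g t = tval M v g t \<longrightarrow> tval M w g t' = tval M v g t')"
  proof (intro iffI ballI impI)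
    fix w v assume H: "\<forall>s'\<subseteq>s. (\<forall>w\<in>s'. \<forall>v\<in>s'. tval M w g t = tval M v g t) \<longrightarrow>
        (\<forall>w\<in>s'. \<forall>v\<in>s'. tval M w g t' = tval M v g t')"
      and "w \<in> s" "v \<in> s" "tval M w g t = tval M v g t"
    then show "tval M w g t' = tval M v g t'"
      by (intro H[rule_format, of "{w, v}"]) auto
  qed blast
  finally show ?thesis .
qed

lemma supp_IEx_neq:
  assumes "closed_trm t"
  shows "supp M s g (IEx x (neq (Var x) t)) \<longleftrightarrow> \<not> Dom M \<subseteq> (\<lambda>w. tval M w g t) ` s"
proof -
  have "supp M s g (IEx x (neq (Var x) t)) \<longleftrightarrow> (\<exists>d\<in>Dom M. \<forall>w\<in>s. d \<noteq> tval M w g t)"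
    by (simp add: neq_def supp_neg tval_fun_upd_closed_trm[OF assms])
  then show ?thesis by blast
qed

definition ab_val :: "('w, 'd) idmodel \<Rightarrow> 'w \<Rightarrow> 'd \<times> 'd" where
  "ab_val M w = (ia M w, ib M w)"

lemma supp_theta: "supp M s g theta \<longleftrightarrow> \<not> Dom M \<times> Dom M \<subseteq> ab_val M ` s"
proof -
  have "supp M s g theta \<longleftrightarrow> (\<exists>d1\<in>Dom M. \<exists>d2\<in>Dom M. \<forall>w\<in>s. (d1, d2) \<noteq> ab_val M w)"
    by (simp add: theta_def supp_neg ab_val_def)
  then show ?thesis by blast
qed

lemma supp_eta:
  assumes "wf_model M" "s \<subseteq> Wor M"
  shows "supp M s g eta \<longleftrightarrow> (\<forall>t\<subseteq>s.
    inj_on fst (ab_val M ` t) \<and> inj_on snd (ab_val M ` t) \<and> \<not> Dom M \<subseteq> ib M ` t \<longrightarrow>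
    \<not> Dom M \<subseteq> ia M ` t)"
proof -
  have "supp M t g (dep CA CB) \<longleftrightarrow> inj_on fst (ab_val M ` t)"
    and "supp M t g (dep CB CA) \<longleftrightarrow> inj_on snd (ab_val M ` t)"
    if "t \<subseteq> s" for t
    using order_trans[OF that assms(2)]
    by (auto simp: supp_dep[OF assms(1)] inj_on_def ab_val_def)
  then show ?thesis
    by (simp add: eta_def supp_IEx_neq del: supp.simps(7))
qed

lemma supp_eta_if_finite_Dom:
  assumes "wf_model M" "finite (Dom M)" "s \<subseteq> Wor M"
  shows "supp M s g eta"
  unfolding supp_eta[OF assms(1,3)]
proof (intro allI impI)
  fix t assume "t \<subseteq> s" and
    t: "inj_on fst (ab_val M ` t) \<and> inj_on snd (ab_val M ` t) \<and> \<not> Dom M \<subseteq> ib M ` t"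
  have a_in_Dom: "ia M ` t \<subseteq> Dom M" and b_in_Dom: "ib M ` t \<subseteq> Dom M"
    using \<open>t \<subseteq> s\<close> assms(1,3) by (auto simp: wf_model_def)
  have "ia M ` t = fst ` ab_val M ` t" "ib M ` t = snd ` ab_val M ` t"
    by (auto simp: ab_val_def image_image)
  with t have "card (ia M ` t) = card (ib M ` t)"
    by (simp add: card_image)
  show "\<not> Dom M \<subseteq> ia M ` t"
  proof
    assume "Dom M \<subseteq> ia M ` t"
    with a_in_Dom \<open>card (ia M ` t) = card (ib M ` t)\<close> have "card (ib M ` t) = card (Dom M)"
      by auto
    with b_in_Dom assms(2) have "ib M ` t = Dom M"
      by (simp add: card_subset_eq)
    with t show False by simp
  qed
qed

lemma supp_theta_if_eta_infinite_Dom: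
  assumes "wf_model M" "infinite (Dom M)" "s \<subseteq> Wor M" "supp M s g eta"
  shows "supp M s g theta"
  unfolding supp_theta
proof
  assume all_pairs: "Dom M \<times> Dom M \<subseteq> ab_val M ` s"
  obtain c where c: "c \<in> Dom M"
    using assms(2) infinite_imp_nonempty by blast
  obtain f where f: "bij_betw f (Dom M) (Dom M - {c})"
    using infinite_imp_bij_betw[OF assms(2)] by blast
  let ?graph = "(\<lambda>d. (d, f d)) ` Dom M"
  have "?graph \<subseteq> ab_val M ` s"
    using all_pairs f by (auto dest: bij_betw_apply)
  then obtain t where "t \<subseteq> s" and t: "ab_val M ` t = ?graph"
    by (auto simp: subset_image_iff)
  have "ia M ` t = Dom M" "ib M ` t = f ` Dom M"
    using arg_cong[OF t, of "image fst"] arg_cong[OF t, of "image snd"]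
    by (simp_all add: ab_val_def image_image)
  moreover have "inj_on fst ?graph" "inj_on snd ?graph"
    using f by (auto simp: inj_on_def bij_betw_def)
  moreover have "\<not> Dom M \<subseteq> f ` Dom M"
    using c f by (auto simp: bij_betw_def)
  moreover have "inj_on fst (ab_val M ` t) \<and> inj_on snd (ab_val M ` t) \<and> \<not> Dom M \<subseteq> ib M ` t \<longrightarrow>
      \<not> Dom M \<subseteq> ia M ` t"
    using assms(4) \<open>t \<subseteq> s\<close> supp_eta[OF assms(1,3)] by blast
  ultimately show False
    using t by simp
qed

lemma supp_theta_if_chi_eta:
  assumes "wf_model M" "s \<subseteq> Wor M" "\<forall>n. supp M s g (chi n)" "supp M s g eta"
  shows "supp M s g theta"
proof (cases "s = {}")
  case True
  with assms(1) show ?thesis by (simp add: supp_theta wf_model_def)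
next
  case False
  with assms(3) have "infinite (Dom M)"
    using supp_chi[of s M g "Suc (card (Dom M))"] by auto
  with assms show ?thesis by (blast intro: supp_theta_if_eta_infinite_Dom)
qed

definition grid_model :: "nat \<Rightarrow> (nat, nat) idmodel" where
  "grid_model m = \<lparr>Wor = prod_encode ` ({..<m} \<times> {..<m}), Dom = {..<m},
     ia = \<lambda>w. fst (prod_decode w), ib = \<lambda>w. snd (prod_decode w)\<rparr>"

lemma ab_val_grid_model: "ab_val (grid_model m) = prod_decode"
  by (simp add: ab_val_def grid_model_def fun_eq_iff)

lemma wf_grid_model: "0 < m \<Longrightarrow> wf_model (grid_model m)"
  by (auto simp: wf_model_def grid_model_def)

lemma not_supp_theta_grid_model: "\<not> supp (grid_model m) (Wor (grid_model m)) g theta"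
  by (simp add: supp_theta ab_val_grid_model image_image) (simp add: grid_model_def image_image)

lemma id_entailsD:
  fixes M :: "('w, 'd) idmodel"
  assumes "id_entails TYPE('w) TYPE('d) \<Phi> \<psi>"
    and "wf_model M" "s \<subseteq> Wor M" "\<And>x. g x \<in> Dom M" "\<And>\<phi>. \<phi> \<in> \<Phi> \<Longrightarrow> supp M s g \<phi>"
  shows "supp M s g \<psi>"
  using assms unfolding id_entails_def by blast

lemma not_id_entails_theta_bounded_chi:
  assumes "X0 \<subseteq> chi ` {..m}"
  shows "\<not> id_entails TYPE(nat) TYPE(nat) (X0 \<union> {eta}) theta"
proof
  let ?M = "grid_model (Suc m)"
  have wf: "wf_model ?M"
    by (simp add: wf_grid_model)
  have chi: "supp ?M (Wor ?M) (\<lambda>_. 0) (chi n)" if "n \<le> m" for n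
    using that by (subst supp_chi) (auto simp: grid_model_def)
  have eta: "supp ?M (Wor ?M) (\<lambda>_. 0) eta"
    by (rule supp_eta_if_finite_Dom[OF wf]) (simp_all add: grid_model_def)
  assume "id_entails TYPE(nat) TYPE(nat) (X0 \<union> {eta}) theta"
  then have "supp ?M (Wor ?M) (\<lambda>_. 0) theta"
  proof (rule id_entailsD[OF _ wf order_refl])
    show "0 \<in> Dom ?M" by (simp add: grid_model_def)
    show "supp ?M (Wor ?M) (\<lambda>_. 0) \<phi>" if "\<phi> \<in> X0 \<union> {eta}" for \<phi>
      using that assms chi eta by auto
  qed
  with not_supp_theta_grid_model show False by blast
qed

theorem mainTheorem3:
  shows "id_entails TYPE('w) TYPE('d) (Xset \<union> {eta}) theta \<and>
         (\<forall>X0. finite X0 \<and> X0 \<subseteq> Xset \<longrightarrow>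
           \<not> id_entails TYPE(nat) TYPE(nat) (X0 \<union> {eta}) theta)"
proof (intro conjI allI impI)
  show "id_entails TYPE('w) TYPE('d) (Xset \<union> {eta}) theta"
    unfolding id_entails_def Xset_def by (auto intro!: supp_theta_if_chi_eta)
next
  fix X0 assume "finite X0 \<and> X0 \<subseteq> Xset"
  then obtain F where "finite F" "X0 = chi ` F"
    unfolding Xset_def by (meson finite_subset_image)
  moreover obtain m where "\<forall>n\<in>F. n \<le> m"
    using \<open>finite F\<close> finite_nat_set_iff_bounded_le by blast
  ultimately have "X0 \<subseteq> chi ` {..m}" by auto
  then show "\<not> id_entails TYPE(nat) TYPE(nat) (X0 \<union> {eta}) theta"
    by (rule not_id_entails_theta_bounded_chi)
qed

end
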